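(* Let $(G_i)_{i\in I}$ be a finite family of finite groups, $G=\prod_{i\in I}G_i$, $\pi_i\colon G\to G_i$ the projections, and $H\le G$ a subgroup. If $HM(G)=G$ and $\pi_i(H)=G_i$ for all $i\in I$, then $H=G$.
   Context: For a finite group $G$, $M(G)$ (the Melnikov subgroup) is the intersection of all maximal normal subgroups of $G$. *)

theory Defs
  imports "HOL-Algebra.Algebra"
begin

definition maximal_normal_subgroup :: "('a, 'b) monoid_scheme \<Rightarrow> 'a set \<Rightarrow> bool" where
  "maximal_normal_subgroup G N \<longleftrightarrow>
     normal N G \<and> N \<noteq> carrier G \<and>
     (\<forall>K. normal K G \<and> N \<subseteq> K \<longrightarrow> K = N \<or> K = carrier G)"

text \<open>Melnikov subgroup: intersection of all maximal normal subgroups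
  (the whole group if there are none).\<close>
definition melnikov :: "('a, 'b) monoid_scheme \<Rightarrow> 'a set" where
  "melnikov G = carrier G \<inter> \<Inter> {N. maximal_normal_subgroup G N}"

end

theory Submission
  imports Defs
begin

text \<open>Induct on finite J \<subseteq> I to show that restricting H to the coordinates in J is onto the
  product of the G_k, k \<in> J. In the step from J to insert j J it suffices that the slice
  S = {h_j | h \<in> H trivial on J}, a normal subgroup of G_j, is all of G_j. Otherwise let N \<supseteq> S be a
  maximal normal subgroup of G_j. Then g \<mapsto> N g_j and the twisted map g \<mapsto> N h_j, where h \<in> H agrees
  with g on J, are two homomorphisms of G onto the simple group G_j/N. Their kernels are maximal
  normal, so both kill M(G); as they agree on H, they agree on H M(G) = G. But they differ at the
  element which is some a \<notin> N at j and trivial elsewhere.\<close>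

lemma (in group_hom) normal_vimage:
  assumes "N \<lhd> H"
  shows "{x \<in> carrier G. h x \<in> N} \<lhd> G"
proof (rule G.normal_invI)
  interpret N: normal N H by (fact assms)
  show "subgroup {x \<in> carrier G. h x \<in> N} G"
    by (rule G.subgroupI) auto
  show "x \<otimes> g \<otimes> inv x \<in> {x \<in> carrier G. h x \<in> N}"
    if "x \<in> carrier G" "g \<in> {x \<in> carrier G. h x \<in> N}" for x g
    using that by (auto intro: H.normal_invE(2)[OF assms])
qed

lemma (in group_hom) image_normal_if_normalized:
  assumes S: "subgroup S G" and A: "A \<subseteq> carrier G" "h ` A = carrier H"
    and normalized: "\<And>a s. a \<in> A \<Longrightarrow> s \<in> S \<Longrightarrow> a \<otimes> s \<otimes> inv a \<in> S"
  shows "h ` S \<lhd> H"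
proof (rule H.normal_invI)
  show "subgroup (h ` S) H" using S by (rule subgroup_img_is_subgroup)
  fix y z assume "y \<in> carrier H" "z \<in> h ` S"
  then have "y \<in> h ` A" using A(2) by simp
  then obtain a where a: "a \<in> A" "y = h a" by blast
  obtain s where s: "s \<in> S" "z = h s" using \<open>z \<in> h ` S\<close> by blast
  have "a \<in> carrier G" "s \<in> carrier G"
    using a(1) A(1) s(1) subgroup.subset[OF S] by auto
  then have "y \<otimes>\<^bsub>H\<^esub> z \<otimes>\<^bsub>H\<^esub> inv\<^bsub>H\<^esub> y = h (a \<otimes> s \<otimes> inv a)"
    using a(2) s(2) by simp
  then show "y \<otimes>\<^bsub>H\<^esub> z \<otimes>\<^bsub>H\<^esub> inv\<^bsub>H\<^esub> y \<in> h ` S"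
    using normalized[OF a(1) s(1)] by simp
qed

lemma (in group_hom) maximal_normal_subgroup_vimage:
  assumes onto: "h ` carrier G = carrier H" and M: "maximal_normal_subgroup H M"
  shows "maximal_normal_subgroup G {x \<in> carrier G. h x \<in> M}" (is "maximal_normal_subgroup G ?P")
  unfolding maximal_normal_subgroup_def
proof (intro conjI allI impI)
  have "M \<lhd> H" "M \<noteq> carrier H"
    and M_max: "\<And>K. K \<lhd> H \<Longrightarrow> M \<subseteq> K \<Longrightarrow> K = M \<or> K = carrier H"
    using M unfolding maximal_normal_subgroup_def by blast+
  have M_sub: "M \<subseteq> carrier H"
    using normal_imp_subgroup[OF \<open>M \<lhd> H\<close>] by (rule subgroup.subset)
  show "?P \<lhd> G" using \<open>M \<lhd> H\<close> by (rule normal_vimage)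
  show "?P \<noteq> carrier G"
  proof
    assume P: "?P = carrier G"
    have "h x \<in> M" if "x \<in> carrier G" for x
      using eqset_imp_iff[OF P, of x] that by blast
    then have "carrier H \<subseteq> M" unfolding onto[symmetric] by blast
    then show False using \<open>M \<noteq> carrier H\<close> M_sub by blast
  qed
  fix K assume "K \<lhd> G \<and> ?P \<subseteq> K"
  then have K: "K \<lhd> G" and PK: "?P \<subseteq> K" by auto
  interpret K: normal K G by (fact K)
  have "M \<subseteq> h ` K"
  proof
    fix y assume "y \<in> M"
    then have "y \<in> h ` carrier G" unfolding onto using M_sub by blast
    then obtain x where "x \<in> carrier G" "y = h x" by (rule imageE)
    with PK \<open>y \<in> M\<close> show "y \<in> h ` K" by blast
  qed
  then have "h ` K = M \<or> h ` K = carrier H"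
    by (rule M_max[OF K.surj_hom_normal_subgroup[OF group_hom_axioms onto]])
  then show "K = ?P \<or> K = carrier G"
  proof
    assume KM: "h ` K = M"
    have "K \<subseteq> ?P"
    proof
      fix x assume "x \<in> K"
      then have "h x \<in> M" unfolding KM[symmetric] by (rule imageI)
      then show "x \<in> ?P" using \<open>x \<in> K\<close> K.subset by blast
    qed
    then show ?thesis using PK by (intro disjI1 subset_antisym)
  next
    assume onto_K: "h ` K = carrier H"
    have "x \<in> K" if x: "x \<in> carrier G" for x
    proof -
      have "h x \<in> h ` K" unfolding onto_K using x by (rule hom_closed)
      then obtain k where k: "k \<in> K" "h k = h x" by (auto elim: imageE)
      then have "k \<in> carrier G" using K.subset by blast
      have "h (x \<otimes> inv k) = \<one>\<^bsub>H\<^esub>"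
        using x k \<open>k \<in> carrier G\<close> by simp
      then have "x \<otimes> inv k \<in> ?P"
        using x \<open>k \<in> carrier G\<close> normal_imp_subgroup[OF \<open>M \<lhd> H\<close>, THEN subgroup.one_closed] by simp
      then have "x \<otimes> inv k \<otimes> k \<in> K" using PK k by blast
      then show ?thesis using x \<open>k \<in> carrier G\<close> by (simp add: G.m_assoc)
    qed
    then show ?thesis using K.subset by blast
  qed
qed

lemma (in group_hom) melnikov_subset_vimage:
  assumes "h ` carrier G = carrier H" "maximal_normal_subgroup H M"
  shows "melnikov G \<subseteq> {x \<in> carrier G. h x \<in> M}"
  using maximal_normal_subgroup_vimage[OF assms] unfolding melnikov_def by blast

lemma (in group) hom_eq_on_melnikov_supplement:
  assumes "subgroup H G" and HM: "H <#> melnikov G = carrier G"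
    and \<phi>: "group_hom G Q \<phi>" "\<phi> ` carrier G = carrier Q"
    and \<psi>: "group_hom G Q \<psi>" "\<psi> ` carrier G = carrier Q"
    and simple: "maximal_normal_subgroup Q {\<one>\<^bsub>Q\<^esub>}"
    and eq_on_H: "\<And>h. h \<in> H \<Longrightarrow> \<phi> h = \<psi> h"
    and g: "g \<in> carrier G"
  shows "\<phi> g = \<psi> g"
proof -
  interpret \<phi>: group_hom G Q \<phi> by (fact \<phi>(1))
  interpret \<psi>: group_hom G Q \<psi> by (fact \<psi>(1))
  have "g \<in> H <#> melnikov G" using g HM by simp
  then obtain h m where hm: "h \<in> H" "m \<in> melnikov G" "g = h \<otimes> m"
    unfolding set_mult_def by blast
  have "h \<in> carrier G" using hm(1) subgroup.subset[OF assms(1)] by blast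
  have "m \<in> carrier G" "\<phi> m = \<one>\<^bsub>Q\<^esub>" "\<psi> m = \<one>\<^bsub>Q\<^esub>"
    using hm(2) \<phi>.melnikov_subset_vimage[OF \<phi>(2) simple]
      \<psi>.melnikov_subset_vimage[OF \<psi>(2) simple] by auto
  then show ?thesis
    using hm \<open>h \<in> carrier G\<close> eq_on_H by simp
qed

lemma (in normal) maximal_normal_subgroup_FactGroup:
  assumes "maximal_normal_subgroup G H"
  shows "maximal_normal_subgroup (G Mod H) {H}"
  unfolding maximal_normal_subgroup_def
proof (intro conjI allI impI)
  interpret Q: group "G Mod H" by (rule factorgroup_is_group)
  have H_max: "\<And>K. K \<lhd> G \<Longrightarrow> H \<subseteq> K \<Longrightarrow> K = H \<or> K = carrier G"
    using assms unfolding maximal_normal_subgroup_def by blast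
  interpret quot: group_hom G "G Mod H" "(#>) H"
    by (simp add: group_hom_def group_hom_axioms_def r_coset_hom_Mod Q.is_group is_group)
  show "{H} \<lhd> G Mod H"
    using Q.one_is_normal by simp
  obtain a where a: "a \<in> carrier G" "a \<notin> H"
    using assms subset unfolding maximal_normal_subgroup_def by blast
  then have "H #> a \<noteq> H"
    using coset_join1 subgroup_axioms by blast
  moreover have "H #> a \<in> carrier (G Mod H)"
    using a(1) unfolding carrier_FactGroup by (rule imageI)
  ultimately show "{H} \<noteq> carrier (G Mod H)"
    by blast
  fix K assume "K \<lhd> G Mod H \<and> {H} \<subseteq> K"
  then have K: "K \<lhd> G Mod H" and "H \<in> K" by auto
  let ?P = "{x \<in> carrier G. H #> x \<in> K}"
  have "H \<subseteq> ?P"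
  proof
    fix x assume "x \<in> H"
    then have "H #> x = H" by (rule rcos_const[OF is_group])
    then show "x \<in> ?P" using \<open>x \<in> H\<close> \<open>H \<in> K\<close> subset by auto
  qed
  then have "?P = H \<or> ?P = carrier G"
    by (rule H_max[OF quot.normal_vimage[OF K]])
  then show "K = {H} \<or> K = carrier (G Mod H)"
  proof
    assume P: "?P = H"
    have "K \<subseteq> {H}"
    proof
      fix k assume "k \<in> K"
      then have "k \<in> (#>) H ` carrier G"
        using normal_imp_subgroup[OF K, THEN subgroup.subset] unfolding carrier_FactGroup by blast
      then obtain x where x: "x \<in> carrier G" "k = H #> x" by blast
      then have "x \<in> ?P" using \<open>k \<in> K\<close> by blast
      then have "x \<in> H" using P by simp
      then show "k \<in> {H}" using x(2) rcos_const[OF is_group] by simp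
    qed
    then show ?thesis using \<open>H \<in> K\<close> by blast
  next
    assume P: "?P = carrier G"
    have "H #> x \<in> K" if "x \<in> carrier G" for x
      using eqset_imp_iff[OF P, of x] that by blast
    then have "carrier (G Mod H) \<subseteq> K"
      unfolding carrier_FactGroup by blast
    then show ?thesis using normal_imp_subgroup[OF K, THEN subgroup.subset] by (intro disjI2 subset_antisym)
  qed
qed

lemma (in group) exists_maximal_normal_subgroup:
  assumes "finite (carrier G)" "N \<lhd> G" "N \<noteq> carrier G"
  obtains M where "maximal_normal_subgroup G M" "N \<subseteq> M"
proof -
  let ?S = "{K. K \<lhd> G \<and> K \<noteq> carrier G \<and> N \<subseteq> K}"
  have "?S \<subseteq> Pow (carrier G)"
    by (auto dest: normal_imp_subgroup subgroup.subset)
  then have "finite ?S"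
    using assms(1) finite_subset by blast
  moreover have "N \<in> ?S"
    using assms by blast
  ultimately obtain M where "M \<in> ?S" "\<forall>K\<in>?S. M \<subseteq> K \<longrightarrow> M = K"
    by (meson finite_has_maximal2)
  then have "maximal_normal_subgroup G M" "N \<subseteq> M"
    unfolding maximal_normal_subgroup_def by blast+
  then show ?thesis by (rule that)
qed

lemma projection_group_hom:
  assumes "\<And>i. i \<in> I \<Longrightarrow> group (Gs i)" "j \<in> I"
  shows "group_hom (product_group I Gs) (Gs j) (\<lambda>f. f j)"
proof -
  have "(\<lambda>f. f j) \<in> hom (product_group I Gs) (Gs j)"
    using assms(2) by (auto intro!: homI)
  then show ?thesis
    using assms by (simp add: group_hom_def group_hom_axioms_def)
qed

lemma restriction_group_hom:
  assumes "\<And>i. i \<in> I \<Longrightarrow> group (Gs i)" "J \<subseteq> I"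
  shows "group_hom (product_group I Gs) (product_group J Gs) (\<lambda>f. restrict f J)"
proof -
  have "(\<lambda>f. restrict f J) \<in> hom (product_group I Gs) (product_group J Gs)"
    using assms(2) by (auto intro!: homI simp: fun_eq_iff PiE_iff subset_iff)
  moreover have "group (product_group J Gs)"
    using assms by (intro product_group) auto
  ultimately show ?thesis
    using assms by (simp add: group_hom_def group_hom_axioms_def)
qed

locale supplemented_subdirect_product =
  fixes I :: "'i set" and Gs :: "'i \<Rightarrow> ('a, 'b) monoid_scheme" and H :: "('i \<Rightarrow> 'a) set"
  assumes groups: "\<And>i. i \<in> I \<Longrightarrow> group (Gs i)"
    and finite_groups: "\<And>i. i \<in> I \<Longrightarrow> finite (carrier (Gs i))"
    and subgroup_H: "subgroup H (product_group I Gs)"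
    and melnikov_supplement:
      "H <#>\<^bsub>product_group I Gs\<^esub> melnikov (product_group I Gs) = carrier (product_group I Gs)"
    and projections_onto: "\<And>i. i \<in> I \<Longrightarrow> (\<lambda>h. h i) ` H = carrier (Gs i)"
begin

abbreviation G where "G \<equiv> product_group I Gs"

sublocale G: group G
  using groups by simp

sublocale H: subgroup H G
  by (fact subgroup_H)

text \<open>Unfolding the product structure makes \<open>H.mem_carrier\<close> and the coordinate rules below
  inapplicable, so it is switched off inside the locale.\<close>
declare carrier_product_group [simp del] mult_product_group [simp del]
  one_product_group [simp del] inv_product_group [simp del]

lemma coordinate_closed: "f \<in> carrier G \<Longrightarrow> i \<in> I \<Longrightarrow> f i \<in> carrier (Gs i)"
  unfolding carrier_product_group by auto

lemma mult_coordinate [simp]: "i \<in> I \<Longrightarrow> (f \<otimes>\<^bsub>G\<^esub> g) i = f i \<otimes>\<^bsub>Gs i\<^esub> g i"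
  by (simp add: mult_product_group)

lemma one_coordinate [simp]: "i \<in> I \<Longrightarrow> \<one>\<^bsub>G\<^esub> i = \<one>\<^bsub>Gs i\<^esub>"
  by (simp add: one_product_group)

lemma inv_coordinate [simp]: "f \<in> carrier G \<Longrightarrow> i \<in> I \<Longrightarrow> (inv\<^bsub>G\<^esub> f) i = inv\<^bsub>Gs i\<^esub> (f i)"
  using groups by (simp add: carrier_product_group inv_product_group)

lemma lift_coordinate:
  assumes "i \<in> I" "x \<in> carrier (Gs i)"
  obtains h where "h \<in> H" "h i = x"
proof -
  have "x \<in> (\<lambda>h. h i) ` H" using assms projections_onto by simp
  then show ?thesis using that by blast
qed

definition restricts_onto :: "'i set \<Rightarrow> bool" where
  "restricts_onto J \<longleftrightarrow> (\<forall>f\<in>carrier G. \<exists>h\<in>H. restrict h J = restrict f J)"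

definition slice :: "'i set \<Rightarrow> 'i \<Rightarrow> 'a set" where
  "slice J j = (\<lambda>h. h j) ` (H \<inter> kernel G (product_group J Gs) (\<lambda>f. restrict f J))"

lemma kernel_restriction_iff:
  "f \<in> kernel G (product_group J Gs) (\<lambda>g. restrict g J) \<longleftrightarrow> f \<in> carrier G \<and> (\<forall>k\<in>J. f k = \<one>\<^bsub>Gs k\<^esub>)"
  unfolding kernel_def by (auto simp: fun_eq_iff restrict_def one_product_group)

lemma slice_normal:
  assumes "J \<subseteq> I" "j \<in> I"
  shows "slice J j \<lhd> Gs j"
proof -
  interpret \<pi>: group_hom G "Gs j" "\<lambda>f. f j" using projection_group_hom[OF groups assms(2)] .
  interpret \<rho>: group_hom G "product_group J Gs" "\<lambda>f. restrict f J"
    using restriction_group_hom[OF groups assms(1)] .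
  let ?K = "kernel G (product_group J Gs) (\<lambda>f. restrict f J)"
  have "?K \<lhd> G" by (rule \<rho>.normal_kernel)
  show ?thesis
    unfolding slice_def
  proof (rule \<pi>.image_normal_if_normalized)
    show "subgroup (H \<inter> ?K) G"
      using subgroup_H \<rho>.subgroup_kernel by (rule G.subgroups_Inter_pair)
    show "H \<subseteq> carrier G" by (rule H.subset)
    show "(\<lambda>f. f j) ` H = carrier (Gs j)" using assms(2) by (rule projections_onto)
    show "a \<otimes>\<^bsub>G\<^esub> s \<otimes>\<^bsub>G\<^esub> inv\<^bsub>G\<^esub> a \<in> H \<inter> ?K" if a: "a \<in> H" and s: "s \<in> H \<inter> ?K" for a s
    proof
      show "a \<otimes>\<^bsub>G\<^esub> s \<otimes>\<^bsub>G\<^esub> inv\<^bsub>G\<^esub> a \<in> H"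
        using a s by (intro H.m_closed H.m_inv_closed) auto
      show "a \<otimes>\<^bsub>G\<^esub> s \<otimes>\<^bsub>G\<^esub> inv\<^bsub>G\<^esub> a \<in> ?K"
        using a s by (intro G.normal_invE(2)[OF \<open>?K \<lhd> G\<close>] H.mem_carrier) auto
    qed
  qed
qed

text \<open>Any \<open>h \<in> H\<close> agreeing with \<open>f\<close> on \<open>J\<close> yields the same coset (\<open>twisted_coset_eq\<close>);
  \<open>SOME\<close> just picks one.\<close>
definition twisted_coset :: "'i set \<Rightarrow> 'i \<Rightarrow> 'a set \<Rightarrow> ('i \<Rightarrow> 'a) \<Rightarrow> 'a set" where
  "twisted_coset J j N f = N #>\<^bsub>Gs j\<^esub> (SOME h. h \<in> H \<and> restrict h J = restrict f J) j"

lemma twisted_coset_eq: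
  assumes "J \<subseteq> I" "j \<in> I" "restricts_onto J" "N \<lhd> Gs j" "slice J j \<subseteq> N"
    and f: "f \<in> carrier G" and h: "h \<in> H" "restrict h J = restrict f J"
  shows "twisted_coset J j N f = N #>\<^bsub>Gs j\<^esub> h j"
proof -
  interpret Gj: group "Gs j" using groups assms(2) .
  interpret N: normal N "Gs j" by (fact assms(4))
  interpret \<pi>: group_hom G "Gs j" "\<lambda>f. f j" using projection_group_hom[OF groups assms(2)] .
  interpret \<rho>: group_hom G "product_group J Gs" "\<lambda>f. restrict f J"
    using restriction_group_hom[OF groups assms(1)] .
  define h' where "h' = (SOME h. h \<in> H \<and> restrict h J = restrict f J)"
  have "\<exists>h. h \<in> H \<and> restrict h J = restrict f J"
    using assms(3) f unfolding restricts_onto_def by blast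
  then have h': "h' \<in> H" "restrict h' J = restrict f J"
    unfolding h'_def by (metis (mono_tags, lifting) someI_ex)+
  have "h \<in> carrier G" "h' \<in> carrier G" using h(1) h'(1) by simp_all
  have "h \<otimes>\<^bsub>G\<^esub> inv\<^bsub>G\<^esub> h' \<in> kernel G (product_group J Gs) (\<lambda>f. restrict f J)"
    using \<open>h \<in> carrier G\<close> \<open>h' \<in> carrier G\<close> f h(2) h'(2)
    by (simp add: kernel_def \<rho>.hom_closed)
  moreover have "h \<otimes>\<^bsub>G\<^esub> inv\<^bsub>G\<^esub> h' \<in> H"
    using h(1) h'(1) by (intro H.m_closed H.m_inv_closed)
  ultimately have "(h \<otimes>\<^bsub>G\<^esub> inv\<^bsub>G\<^esub> h') j \<in> N"
    using assms(5) unfolding slice_def by blast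
  then have "h j \<in> N #>\<^bsub>Gs j\<^esub> h' j"
    using \<open>h \<in> carrier G\<close> \<open>h' \<in> carrier G\<close>
    by (simp add: N.rcos_module Gj.is_group)
  then show ?thesis
    unfolding twisted_coset_def h'_def[symmetric] using \<open>h' \<in> carrier G\<close>
    by (simp add: Gj.repr_independence N.subgroup_axioms)
qed

lemma twisted_coset_group_hom:
  assumes "J \<subseteq> I" "j \<in> I" "restricts_onto J" "N \<lhd> Gs j" "slice J j \<subseteq> N"
  shows "group_hom G (Gs j Mod N) (twisted_coset J j N)"
    and "twisted_coset J j N ` carrier G = carrier (Gs j Mod N)"
proof -
  interpret N: normal N "Gs j" by (fact assms(4))
  note eq = twisted_coset_eq[OF assms]
  have lift: "\<exists>h\<in>H. restrict h J = restrict f J" if "f \<in> carrier G" for f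
    using assms(3) that unfolding restricts_onto_def by blast
  have closed: "twisted_coset J j N f \<in> carrier (Gs j Mod N)" if f: "f \<in> carrier G" for f
  proof -
    obtain h where "h \<in> H" "restrict h J = restrict f J" using lift[OF f] by blast
    then show ?thesis
      using eq f assms(2) by (simp add: carrier_FactGroup coordinate_closed)
  qed
  have mult: "twisted_coset J j N (f \<otimes>\<^bsub>G\<^esub> g) =
      twisted_coset J j N f \<otimes>\<^bsub>Gs j Mod N\<^esub> twisted_coset J j N g"
    if f: "f \<in> carrier G" and g: "g \<in> carrier G" for f g
  proof -
    interpret \<rho>: group_hom G "product_group J Gs" "\<lambda>f. restrict f J"
      using restriction_group_hom[OF groups assms(1)] .
    obtain h where h: "h \<in> H" "restrict h J = restrict f J" using lift[OF f] by blast
    obtain h' where h': "h' \<in> H" "restrict h' J = restrict g J" using lift[OF g] by blast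
    have "restrict (h \<otimes>\<^bsub>G\<^esub> h') J = restrict (f \<otimes>\<^bsub>G\<^esub> g) J"
      using f g h h' by simp
    then have "twisted_coset J j N (f \<otimes>\<^bsub>G\<^esub> g) = N #>\<^bsub>Gs j\<^esub> (h j \<otimes>\<^bsub>Gs j\<^esub> h' j)"
      using eq[of "f \<otimes>\<^bsub>G\<^esub> g" "h \<otimes>\<^bsub>G\<^esub> h'"] f g h(1) h'(1) assms(2) by simp
    also have "\<dots> = (N #>\<^bsub>Gs j\<^esub> h j) <#>\<^bsub>Gs j\<^esub> (N #>\<^bsub>Gs j\<^esub> h' j)"
      using h(1) h'(1) assms(2) by (simp add: N.rcos_sum coordinate_closed)
    finally show ?thesis
      using eq f g h h' by simp
  qed
  show "group_hom G (Gs j Mod N) (twisted_coset J j N)"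
    using closed mult
    by (simp add: group_hom_def group_hom_axioms_def N.factorgroup_is_group G.is_group homI)
  show "twisted_coset J j N ` carrier G = carrier (Gs j Mod N)"
  proof
    show "twisted_coset J j N ` carrier G \<subseteq> carrier (Gs j Mod N)"
      using closed by blast
    show "carrier (Gs j Mod N) \<subseteq> twisted_coset J j N ` carrier G"
    proof
      fix C assume "C \<in> carrier (Gs j Mod N)"
      then obtain x where "x \<in> carrier (Gs j)" "C = N #>\<^bsub>Gs j\<^esub> x"
        unfolding carrier_FactGroup by blast
      moreover obtain h where "h \<in> H" "h j = x"
        using lift_coordinate[OF assms(2) \<open>x \<in> carrier (Gs j)\<close>] .
      ultimately have "C = twisted_coset J j N h"
        using eq by simp
      then show "C \<in> twisted_coset J j N ` carrier G"
        using \<open>h \<in> H\<close> by simp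
    qed
  qed
qed

lemma coordinate_coset_group_hom:
  assumes "j \<in> I" "N \<lhd> Gs j"
  shows "group_hom G (Gs j Mod N) (\<lambda>f. N #>\<^bsub>Gs j\<^esub> f j)"
    and "(\<lambda>f. N #>\<^bsub>Gs j\<^esub> f j) ` carrier G = carrier (Gs j Mod N)"
proof -
  interpret N: normal N "Gs j" by (fact assms(2))
  interpret \<pi>: group_hom G "Gs j" "\<lambda>f. f j" using projection_group_hom[OF groups assms(1)] .
  have "(\<lambda>a. N #>\<^bsub>Gs j\<^esub> a) \<circ> (\<lambda>f. f j) \<in> hom G (Gs j Mod N)"
    using \<pi>.homh N.r_coset_hom_Mod by (rule hom_compose)
  then show "group_hom G (Gs j Mod N) (\<lambda>f. N #>\<^bsub>Gs j\<^esub> f j)"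
    by (simp add: group_hom_def group_hom_axioms_def N.factorgroup_is_group G.is_group comp_def)
  have "(\<lambda>f. f j) ` carrier G = carrier (Gs j)"
    using projections_onto[OF assms(1)] H.subset coordinate_closed[OF _ assms(1)] by blast
  then show "(\<lambda>f. N #>\<^bsub>Gs j\<^esub> f j) ` carrier G = carrier (Gs j Mod N)"
    unfolding carrier_FactGroup image_image[symmetric, of "(#>\<^bsub>Gs j\<^esub>) N" "\<lambda>f. f j"] by simp
qed

lemma slice_eq_carrier:
  assumes J: "J \<subseteq> I" and j: "j \<in> I" "j \<notin> J" and onto: "restricts_onto J"
  shows "slice J j = carrier (Gs j)"
proof (rule ccontr)
  interpret Gj: group "Gs j" using groups j(1) .
  assume "slice J j \<noteq> carrier (Gs j)"
  then obtain N where N: "maximal_normal_subgroup (Gs j) N" "slice J j \<subseteq> N"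
    using Gj.exists_maximal_normal_subgroup[OF finite_groups[OF j(1)] slice_normal[OF J j(1)]] by blast
  then have "N \<lhd> Gs j" "N \<noteq> carrier (Gs j)" unfolding maximal_normal_subgroup_def by blast+
  interpret N: normal N "Gs j" by fact
  note twisted = twisted_coset_group_hom[OF J j(1) onto \<open>N \<lhd> Gs j\<close> N(2)]
  note twisted_eq = twisted_coset_eq[OF J j(1) onto \<open>N \<lhd> Gs j\<close> N(2)]
  note coset = coordinate_coset_group_hom[OF j(1) \<open>N \<lhd> Gs j\<close>]
  obtain a where a: "a \<in> carrier (Gs j)" "a \<notin> N"
    using \<open>N \<noteq> carrier (Gs j)\<close> N.subset by blast
  define g where "g = (\<lambda>i\<in>I. if i = j then a else \<one>\<^bsub>Gs i\<^esub>)"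
  have g: "g \<in> carrier G"
    unfolding g_def carrier_product_group
    using a coordinate_closed[OF G.one_closed] by auto
  have "restrict \<one>\<^bsub>G\<^esub> J = restrict g J"
    using J j by (intro restrict_ext) (auto simp: g_def)
  then have "twisted_coset J j N g = N #>\<^bsub>Gs j\<^esub> \<one>\<^bsub>G\<^esub> j"
    by (rule twisted_eq[OF g H.one_closed])
  also have "\<dots> = N"
    using j(1) by (simp add: N.rcos_const Gj.is_group)
  finally have twisted_g: "twisted_coset J j N g = N" .
  have "N #>\<^bsub>Gs j\<^esub> g j = twisted_coset J j N g"
  proof (rule G.hom_eq_on_melnikov_supplement[OF subgroup_H melnikov_supplement coset twisted _ _ g])
    show "maximal_normal_subgroup (Gs j Mod N) {\<one>\<^bsub>Gs j Mod N\<^esub>}"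
      using N.maximal_normal_subgroup_FactGroup[OF N(1)] by simp
    show "N #>\<^bsub>Gs j\<^esub> h j = twisted_coset J j N h" if "h \<in> H" for h
      using that by (simp add: twisted_eq)
  qed
  then have "N #>\<^bsub>Gs j\<^esub> a = N"
    using twisted_g j(1) by (simp add: g_def)
  then show False
    using a Gj.coset_join1 N.subgroup_axioms by blast
qed

lemma restricts_onto_insert:
  assumes "J \<subseteq> I" "j \<in> I" "j \<notin> J" and onto: "restricts_onto J"
  shows "restricts_onto (insert j J)"
  unfolding restricts_onto_def
proof
  interpret Gj: group "Gs j" using groups assms(2) .
  fix f assume f: "f \<in> carrier G"
  obtain h where h: "h \<in> H" "restrict h J = restrict f J"
    using onto f unfolding restricts_onto_def by blast
  have "inv\<^bsub>Gs j\<^esub> h j \<otimes>\<^bsub>Gs j\<^esub> f j \<in> slice J j"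
    unfolding slice_eq_carrier[OF assms] using h(1) f assms(2) by (simp add: coordinate_closed)
  then obtain h' where "h' \<in> H \<inter> kernel G (product_group J Gs) (\<lambda>f. restrict f J)"
      and h'_j: "h' j = inv\<^bsub>Gs j\<^esub> h j \<otimes>\<^bsub>Gs j\<^esub> f j"
    unfolding slice_def by (metis imageE)
  then have h': "h' \<in> H" "\<forall>k\<in>J. h' k = \<one>\<^bsub>Gs k\<^esub>"
    by (simp_all add: kernel_restriction_iff)
  have "restrict (h \<otimes>\<^bsub>G\<^esub> h') (insert j J) = restrict f (insert j J)"
  proof (rule restrict_ext)
    fix k assume "k \<in> insert j J"
    then consider "k = j" | "k \<in> J" by blast
    then show "(h \<otimes>\<^bsub>G\<^esub> h') k = f k"
    proof cases
      case 1
      then show ?thesis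
        using h(1) h'(1) h'_j f assms(2) by (simp add: coordinate_closed Gj.m_assoc[symmetric])
    next
      case 2
      interpret Gk: group "Gs k" using groups 2 assms(1) by blast
      have "h k = f k" using fun_cong[OF h(2), of k] 2 by simp
      then show ?thesis
        using h(1) h'(2) f 2 assms(1) by (auto simp: coordinate_closed)
    qed
  qed
  then show "\<exists>h\<in>H. restrict h (insert j J) = restrict f (insert j J)"
    using h(1) h'(1) H.m_closed by blast
qed

lemma restricts_onto_finite:
  assumes "finite J" "J \<subseteq> I"
  shows "restricts_onto J"
  using assms
proof (induction J rule: finite_induct)
  case empty
  have "restrict h {} = restrict f {}" for h f :: "'i \<Rightarrow> 'a"
    by (simp add: restrict_def)
  then show ?case
    unfolding restricts_onto_def using H.one_closed by blast
next
  case (insert j J)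
  then show ?case by (intro restricts_onto_insert) auto
qed

lemma eq_carrier:
  assumes "finite I"
  shows "H = carrier G"
proof
  show "carrier G \<subseteq> H"
  proof
    fix f assume f: "f \<in> carrier G"
    then obtain h where h: "h \<in> H" "restrict h I = restrict f I"
      using restricts_onto_finite[OF assms subset_refl] unfolding restricts_onto_def by blast
    have "h \<in> carrier G" using h(1) by simp
    then have "h = f"
      using h(2) f by (simp add: carrier_product_group PiE_def extensional_restrict)
    then show "f \<in> H" using h(1) by simp
  qed
qed (rule H.subset)

end

theorem mainTheorem14:
  fixes I :: "'i set" and Gs :: "'i \<Rightarrow> ('a, 'b) monoid_scheme" and H :: "('i \<Rightarrow> 'a) set"
  assumes "finite I"
    and "\<And>i. i \<in> I \<Longrightarrow> group (Gs i)"
    and "\<And>i. i \<in> I \<Longrightarrow> finite (carrier (Gs i))"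
    and "subgroup H (product_group I Gs)"
    and "H <#>\<^bsub>product_group I Gs\<^esub> melnikov (product_group I Gs) = carrier (product_group I Gs)"
    and "\<And>i. i \<in> I \<Longrightarrow> (\<lambda>h. h i) ` H = carrier (Gs i)"
  shows "H = carrier (product_group I Gs)"
proof -
  interpret supplemented_subdirect_product I Gs H
    using assms(2-6) by (rule supplemented_subdirect_product.intro)
  show ?thesis using assms(1) by (rule eq_carrier)
qed

end
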